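(* Let $(\mathcal{A},v)$ be a valued abelian group and $A_1,\dots,A_n$ subgroups of $\mathcal{A}$ such that each $(A_i,v)$ is spherically complete. If the sum $A_1+\dots+A_n$ is pseudo-direct, then $(A_1+\dots+A_n,v)$ is spherically complete and has the optimal approximation property in $\mathcal{A}$: for every $z\in\mathcal{A}$ there is $y_0\in A_1+\dots+A_n$ with $v(z-y_0)=\max\{v(z-y)\mid y\in A_1+\dots+A_n\}$.
   Context: A valued abelian group $(G,v)$ is an abelian group with a map $v$ onto $vG\cup\{\infty\}$ ($vG$ totally ordered, $\infty$ maximal) with $va=\infty$ iff $a=0$ and $v(a-b)\ge\min\{va,vb\}$; subgroups carry the restricted $v$. It is spherically complete if in the ultrametric space $u(a,b)=v(a-b)$ every nest (family totally ordered by inclusion) of balls has non-empty intersection, balls being unions of non-empty collections of closed balls $\{x:v(x-c)\ge\alpha\}$ with a common element. The sum $A_1+\dots+A_n$ is pseudo-direct if for every nonzero $a'\in A_1+\dots+A_n$ there are $a_i\in A_i$ with $v\sum_{i=1}^na_i=\min_iva_i$ and $v(a'-\sum_{i=1}^na_i)>va'$. *)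

theory Defs
  imports Main
begin

definition valued_group :: "('a::ab_group_add \<Rightarrow> 'g::{linorder,order_top}) \<Rightarrow> bool" where
  "valued_group v \<longleftrightarrow> (\<forall>a. v a = top \<longleftrightarrow> a = 0) \<and> (\<forall>a b. min (v a) (v b) \<le> v (a - b))"

definition ab_subgroup :: "'a::ab_group_add set \<Rightarrow> bool" where
  "ab_subgroup A \<longleftrightarrow> 0 \<in> A \<and> (\<forall>a\<in>A. \<forall>b\<in>A. a - b \<in> A)"

text \<open>Closed ball in the ultrametric space (A, u), u(a,b) = v(a-b).\<close>
definition closed_ball_v :: "('a::ab_group_add \<Rightarrow> 'g::linorder) \<Rightarrow> 'a set \<Rightarrow> 'a \<Rightarrow> 'g \<Rightarrow> 'a set" where
  "closed_ball_v v A c \<alpha> = {x \<in> A. \<alpha> \<le> v (x - c)}"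

text \<open>Balls: unions of non-empty collections of closed balls having a common element;
radii range over the value set of the space (A,u), which is v ` A.\<close>
definition is_ball_v :: "('a::ab_group_add \<Rightarrow> 'g::linorder) \<Rightarrow> 'a set \<Rightarrow> 'a set \<Rightarrow> bool" where
  "is_ball_v v A B \<longleftrightarrow> (\<exists>\<C>. \<C> \<noteq> {} \<and>
      \<C> \<subseteq> {closed_ball_v v A c \<alpha> | c \<alpha>. c \<in> A \<and> \<alpha> \<in> v ` A} \<and>
      (\<exists>x. \<forall>C\<in>\<C>. x \<in> C) \<and> B = \<Union>\<C>)"

definition spherically_complete :: "('a::ab_group_add \<Rightarrow> 'g::linorder) \<Rightarrow> 'a set \<Rightarrow> bool" where
  "spherically_complete v A \<longleftrightarrow>
     (\<forall>\<N>. \<N> \<noteq> {} \<and> (\<forall>B\<in>\<N>. is_ball_v v A B) \<and> (\<forall>B1\<in>\<N>. \<forall>B2\<in>\<N>. B1 \<subseteq> B2 \<or> B2 \<subseteq> B1)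
          \<longrightarrow> \<Inter>\<N> \<noteq> {})"

definition sum_sets :: "(nat \<Rightarrow> 'a::ab_group_add set) \<Rightarrow> nat \<Rightarrow> 'a set" where
  "sum_sets A n = {(\<Sum>i<n. a i) | a. \<forall>i<n. a i \<in> A i}"

definition pseudo_direct :: "('a::ab_group_add \<Rightarrow> 'g::linorder) \<Rightarrow> (nat \<Rightarrow> 'a set) \<Rightarrow> nat \<Rightarrow> bool" where
  "pseudo_direct v A n \<longleftrightarrow>
     (\<forall>a'\<in>sum_sets A n. a' \<noteq> 0 \<longrightarrow>
        (\<exists>a. (\<forall>i<n. a i \<in> A i) \<and> v (\<Sum>i<n. a i) = (MIN i\<in>{..<n}. v (a i))
              \<and> v (a' - (\<Sum>i<n. a i)) > v a'))"

end

theory Submission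
  imports Defs
begin

text \<open>
  The product \<open>A\<^sub>0 \<times> \<dots> \<times> A\<^sub>n\<^sub>-\<^sub>1\<close>, valued by the minimum of the coordinate values, is
  spherically complete: its balls are products of balls with a common set of radii.
  Pseudo-directness yields, by transfinite successive approximation along a maximal chain of
  product balls, a decomposition \<open>s = \<Sum> d\<^sub>i\<close> of every \<open>s\<close> in the sum with all
  \<open>v d\<^sub>i \<ge> v s\<close>. With these decompositions a nest of balls of the sum lifts to a maximal
  chain of product balls, and a common point of that chain sums into every ball of the nest.
  Optimal approximation of \<open>z\<close> comes from a point in the intersection of the nest of balls
  \<open>{x. v (z - y) \<le> v (z - x)}\<close>.
\<close>

definition upclosed :: "'g::linorder set \<Rightarrow> bool" where
  "upclosed U \<longleftrightarrow> (\<forall>\<alpha>\<in>U. \<forall>\<beta>. \<alpha> \<le> \<beta> \<longrightarrow> \<beta> \<in> U)"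

definition cut_ball :: "('a::ab_group_add \<Rightarrow> 'g::linorder) \<Rightarrow> 'a set \<Rightarrow> 'a \<Rightarrow> 'g set \<Rightarrow> 'a set" where
  "cut_ball v A c U = {x\<in>A. v (x - c) \<in> U}"

definition diam_set :: "('a::ab_group_add \<Rightarrow> 'g::linorder) \<Rightarrow> 'a set \<Rightarrow> 'g set" where
  "diam_set v B = {\<alpha>. \<exists>a\<in>B. \<exists>b\<in>B. v (a - b) \<le> \<alpha>}"

text \<open>Coordinates from \<open>n\<close> on are unconstrained.\<close>
definition prod_ball ::
    "('a::ab_group_add \<Rightarrow> 'g::linorder) \<Rightarrow> (nat \<Rightarrow> 'a set) \<Rightarrow> nat \<Rightarrow> (nat \<Rightarrow> 'a) \<Rightarrow> 'g set \<Rightarrow> (nat \<Rightarrow> 'a) set" where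
  "prod_ball v A n c U = {x. \<forall>i<n. x i \<in> A i \<and> v (x i - c i) \<in> U}"

definition is_prod_ball ::
    "('a::ab_group_add \<Rightarrow> 'g::linorder) \<Rightarrow> (nat \<Rightarrow> 'a set) \<Rightarrow> nat \<Rightarrow> (nat \<Rightarrow> 'a) set \<Rightarrow> bool" where
  "is_prod_ball v A n K \<longleftrightarrow>
     (\<exists>c U. (\<forall>i<n. c i \<in> A i) \<and> upclosed U \<and> U \<noteq> {} \<and> K = prod_ball v A n c U)"

definition partial_decomposition ::
    "('a::ab_group_add \<Rightarrow> 'g::linorder) \<Rightarrow> (nat \<Rightarrow> 'a set) \<Rightarrow> nat \<Rightarrow> 'a \<Rightarrow> (nat \<Rightarrow> 'a) \<Rightarrow> bool" where
  "partial_decomposition v A n s p \<longleftrightarrow>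
     (\<forall>i<n. p i \<in> A i \<and> v s \<le> v (p i)) \<and> v s \<le> v (s - (\<Sum>i<n. p i))"

lemma is_prod_ballI:
  "\<forall>i<n. c i \<in> A i \<Longrightarrow> upclosed U \<Longrightarrow> U \<noteq> {} \<Longrightarrow> is_prod_ball v A n (prod_ball v A n c U)"
  unfolding is_prod_ball_def by blast

lemma upclosed_atLeast: "upclosed {\<alpha>..}"
  unfolding upclosed_def by auto

lemma upclosed_diam_set: "upclosed (diam_set v B)"
  unfolding upclosed_def diam_set_def by (blast intro: order.trans)

lemma diam_set_mono: "B \<subseteq> B' \<Longrightarrow> diam_set v B \<subseteq> diam_set v B'"
  unfolding diam_set_def by blast

lemma diff_mem_diam_set: "a \<in> B \<Longrightarrow> b \<in> B \<Longrightarrow> v (a - b) \<in> diam_set v B"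
  unfolding diam_set_def by blast

lemma diam_set_nonempty: "B \<noteq> {} \<Longrightarrow> diam_set v B \<noteq> {}"
  using diff_mem_diam_set by blast

lemma upclosed_min_le_mem:
  assumes "upclosed U" "\<alpha> \<in> U" "\<beta> \<in> U" "min \<alpha> \<beta> \<le> \<gamma>"
  shows "\<gamma> \<in> U"
  using assms unfolding upclosed_def by (cases "\<alpha> \<le> \<beta>") (auto simp: min_def)

lemma ab_subgroup_zero: "ab_subgroup A \<Longrightarrow> 0 \<in> A"
  unfolding ab_subgroup_def by blast

lemma ab_subgroup_diff: "ab_subgroup A \<Longrightarrow> a \<in> A \<Longrightarrow> b \<in> A \<Longrightarrow> a - b \<in> A"
  unfolding ab_subgroup_def by blast

lemma ab_subgroup_add:
  assumes "ab_subgroup A" "a \<in> A" "b \<in> A"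
  shows "a + b \<in> A"
  using ab_subgroup_diff[OF assms(1,2) ab_subgroup_diff[OF assms(1) ab_subgroup_zero[OF assms(1)] assms(3)]]
  by simp

lemma mem_sum_sets_iff: "y \<in> sum_sets A n \<longleftrightarrow> (\<exists>a. (\<forall>i<n. a i \<in> A i) \<and> y = (\<Sum>i<n. a i))"
  unfolding sum_sets_def by auto

lemma sum_mem_sum_sets: "\<forall>i<n. a i \<in> A i \<Longrightarrow> (\<Sum>i<n. a i) \<in> sum_sets A n"
  unfolding mem_sum_sets_iff by blast

lemma sum_sets_diff:
  assumes "\<forall>i<n. ab_subgroup (A i)" "x \<in> sum_sets A n" "y \<in> sum_sets A n"
  shows "x - y \<in> sum_sets A n"
proof -
  obtain a b where a: "\<forall>i<n. a i \<in> A i" "x = (\<Sum>i<n. a i)"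
    and b: "\<forall>i<n. b i \<in> A i" "y = (\<Sum>i<n. b i)"
    using assms(2,3) unfolding mem_sum_sets_iff by blast
  have "\<forall>i<n. a i - b i \<in> A i"
    using a(1) b(1) assms(1) ab_subgroup_diff by blast
  then show ?thesis
    using sum_mem_sum_sets[of n "\<lambda>i. a i - b i"] by (simp add: a(2) b(2) sum_subtractf)
qed

lemma ab_subgroup_sum_sets:
  assumes "\<forall>i<n. ab_subgroup (A i)"
  shows "ab_subgroup (sum_sets A n)"
  using sum_mem_sum_sets[of n "\<lambda>_. 0" A] assms ab_subgroup_zero sum_sets_diff[OF assms]
  unfolding ab_subgroup_def by auto

lemma spherically_completeD:
  assumes "spherically_complete v A" "\<N> \<noteq> {}" "\<forall>B\<in>\<N>. is_ball_v v A B"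
    "\<forall>B1\<in>\<N>. \<forall>B2\<in>\<N>. B1 \<subseteq> B2 \<or> B2 \<subseteq> B1"
  shows "\<Inter>\<N> \<noteq> {}"
  using assms unfolding spherically_complete_def by blast

lemma maxchain_extend:
  assumes "subset.maxchain F M" "K \<in> F" "\<forall>L\<in>M. K \<subseteq> L"
  shows "K \<in> M"
proof (rule ccontr)
  assume "K \<notin> M"
  have "subset.chain F (insert K M)"
    using assms unfolding subset.maxchain_def subset.chain_def by blast
  moreover have "M \<subset> insert K M"
    using \<open>K \<notin> M\<close> by blast
  ultimately show False
    using assms(1) unfolding subset.maxchain_def by blast
qed

context
  fixes v :: "'a::ab_group_add \<Rightarrow> 'g::{linorder,order_top}"
  assumes valued: "valued_group v"
begin

lemma v_zero: "v 0 = top"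
  using valued unfolding valued_group_def by blast

lemma v_diff_ge_min: "min (v a) (v b) \<le> v (a - b)"
  using valued unfolding valued_group_def by blast

lemma v_uminus: "v (- a) = v a"
  using v_diff_ge_min[of 0 a] v_diff_ge_min[of 0 "- a"] by (simp add: v_zero)

lemma v_diff_commute: "v (a - b) = v (b - a)"
  using v_uminus[of "a - b"] by simp

lemma v_add_ge_min: "min (v a) (v b) \<le> v (a + b)"
  using v_diff_ge_min[of a "- b"] by (simp add: v_uminus)

lemma v_diff_trans_ge_min: "min (v (a - b)) (v (b - c)) \<le> v (a - c)"
  using v_add_ge_min[of "a - b" "b - c"] by simp

lemma v_eq_if_less_v_diff:
  assumes "v x < v (x - y)"
  shows "v y = v x"
proof -
  have "v x \<le> v y"
    using v_diff_ge_min[of x "x - y"] assms by simp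
  moreover have "v y \<le> v x"
    using v_add_ge_min[of y "x - y"] assms by (auto simp: min_le_iff_disj)
  ultimately show ?thesis
    by simp
qed

lemma v_add_mem: "upclosed U \<Longrightarrow> v a \<in> U \<Longrightarrow> v b \<in> U \<Longrightarrow> v (a + b) \<in> U"
  using upclosed_min_le_mem v_add_ge_min by blast

lemma v_diff_trans_mem: "upclosed U \<Longrightarrow> v (a - b) \<in> U \<Longrightarrow> v (b - c) \<in> U \<Longrightarrow> v (a - c) \<in> U"
  using upclosed_min_le_mem v_diff_trans_ge_min by blast

lemma v_add_ge: "\<alpha> \<le> v a \<Longrightarrow> \<alpha> \<le> v b \<Longrightarrow> \<alpha> \<le> v (a + b)"
  using v_add_mem[OF upclosed_atLeast] by simp

lemma v_diff_trans_ge: "\<alpha> \<le> v (a - b) \<Longrightarrow> \<alpha> \<le> v (b - c) \<Longrightarrow> \<alpha> \<le> v (a - c)"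
  using v_diff_trans_mem[OF upclosed_atLeast] by simp

lemma v_sum_mem:
  fixes n :: nat
  assumes "upclosed U" "U \<noteq> {}" "\<forall>i<n. v (x i) \<in> U"
  shows "v (\<Sum>i<n. x i) \<in> U"
  using assms(3)
proof (induction n)
  case 0
  obtain \<alpha> where "\<alpha> \<in> U"
    using assms(2) by blast
  then show ?case
    using assms(1) unfolding upclosed_def by (simp add: v_zero)
next
  case (Suc n)
  then show ?case
    using v_add_mem[OF assms(1)] by simp
qed

lemma v_diff_le_iff: "v (z - y) \<le> v (z - x) \<longleftrightarrow> v (z - y) \<le> v (x - y)"
  using v_diff_trans_ge[of "v (z - y)" x z y] v_diff_trans_ge[of "v (z - y)" z y x]
  by (auto simp: v_diff_commute[of x z] v_diff_commute[of y x])

section \<open>Balls\<close>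

lemma cut_ball_is_ball:
  assumes A: "ab_subgroup A" and c: "c \<in> A" and U: "upclosed U" "U \<noteq> {}"
  shows "is_ball_v v A (cut_ball v A c U)"
proof -
  let ?C = "(\<lambda>x. closed_ball_v v A c (v (x - c))) ` cut_ball v A c U"
  obtain \<alpha> where "\<alpha> \<in> U"
    using U(2) by blast
  then have "v 0 \<in> U"
    using U(1) top_greatest unfolding upclosed_def v_zero by blast
  then have "c \<in> cut_ball v A c U"
    using c by (simp add: cut_ball_def)
  moreover have "?C \<subseteq> {closed_ball_v v A c \<alpha> | c \<alpha>. c \<in> A \<and> \<alpha> \<in> v ` A}"
  proof
    fix C assume "C \<in> ?C"
    then obtain x where "x \<in> A" "C = closed_ball_v v A c (v (x - c))"
      by (auto simp: cut_ball_def)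
    moreover have "x - c \<in> A"
      using A \<open>x \<in> A\<close> c by (rule ab_subgroup_diff)
    ultimately show "C \<in> {closed_ball_v v A c \<alpha> | c \<alpha>. c \<in> A \<and> \<alpha> \<in> v ` A}"
      using c by blast
  qed
  moreover have "\<forall>C\<in>?C. c \<in> C"
    using c by (auto simp: closed_ball_v_def v_zero)
  moreover have "cut_ball v A c U = \<Union>?C"
  proof
    have "x \<in> closed_ball_v v A c (v (x - c))" if "x \<in> cut_ball v A c U" for x
      using that by (simp add: cut_ball_def closed_ball_v_def)
    then show "cut_ball v A c U \<subseteq> \<Union>?C"
      by blast
    show "\<Union>?C \<subseteq> cut_ball v A c U"
      using U(1) unfolding upclosed_def cut_ball_def closed_ball_v_def by blast
  qed
  ultimately show ?thesis
    unfolding is_ball_v_def by (intro exI[of _ ?C]) blast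
qed

lemma ball_centre:
  assumes "is_ball_v v S B"
  obtains x where "x \<in> B" "B \<subseteq> S" "\<And>u. u \<in> B \<Longrightarrow> \<exists>\<alpha>. \<alpha> \<le> v (u - x) \<and> closed_ball_v v S x \<alpha> \<subseteq> B"
proof -
  obtain \<C> x where C: "\<C> \<noteq> {}" "\<C> \<subseteq> {closed_ball_v v S c \<alpha> | c \<alpha>. c \<in> S \<and> \<alpha> \<in> v ` S}"
    "\<forall>C\<in>\<C>. x \<in> C" "B = \<Union>\<C>"
    using assms unfolding is_ball_v_def by blast
  have "\<exists>\<alpha>. \<alpha> \<le> v (u - x) \<and> closed_ball_v v S x \<alpha> \<subseteq> B" if "u \<in> B" for u
  proof -
    obtain c \<alpha> where C_u: "closed_ball_v v S c \<alpha> \<in> \<C>" "u \<in> closed_ball_v v S c \<alpha>"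
      using \<open>u \<in> B\<close> C(2,4) by blast
    have "x \<in> closed_ball_v v S c \<alpha>"
      using C(3) C_u(1) by blast
    then have x_c: "\<alpha> \<le> v (x - c)"
      by (simp add: closed_ball_v_def)
    have "\<alpha> \<le> v (u - x)"
      using C_u(2) x_c v_diff_trans_ge[of \<alpha> u c x] unfolding closed_ball_v_def
      by (simp add: v_diff_commute[of c x])
    moreover have "y \<in> B" if "y \<in> S" "\<alpha> \<le> v (y - x)" for y
    proof -
      have "y \<in> closed_ball_v v S c \<alpha>"
        using that v_diff_trans_ge[OF that(2) x_c] unfolding closed_ball_v_def by blast
      then show ?thesis
        using C_u(1) C(4) by blast
    qed
    ultimately show ?thesis
      unfolding closed_ball_v_def by blast
  qed
  moreover have "x \<in> B" "B \<subseteq> S"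
    using C unfolding closed_ball_v_def by blast+
  ultimately show ?thesis
    using that by blast
qed

lemma ball_eq_cut_ball:
  assumes B: "is_ball_v v S B" and c: "c \<in> B"
  shows "B = cut_ball v S c (diam_set v B)"
proof
  obtain x where x: "x \<in> B" "B \<subseteq> S"
    and radius: "\<And>u. u \<in> B \<Longrightarrow> \<exists>\<alpha>. \<alpha> \<le> v (u - x) \<and> closed_ball_v v S x \<alpha> \<subseteq> B"
    using ball_centre[OF B] by blast
  show "B \<subseteq> cut_ball v S c (diam_set v B)"
    using x(2) c diff_mem_diam_set unfolding cut_ball_def by blast
  show "cut_ball v S c (diam_set v B) \<subseteq> B"
  proof
    fix y assume "y \<in> cut_ball v S c (diam_set v B)"
    then obtain a b where y: "y \<in> S" "a \<in> B" "b \<in> B" "v (a - b) \<le> v (y - c)"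
      unfolding cut_ball_def diam_set_def by blast
    obtain \<alpha> \<beta> \<gamma> where
      \<alpha>: "\<alpha> \<le> v (a - x)" "closed_ball_v v S x \<alpha> \<subseteq> B" and
      \<beta>: "\<beta> \<le> v (b - x)" "closed_ball_v v S x \<beta> \<subseteq> B" and
      \<gamma>: "\<gamma> \<le> v (c - x)" "closed_ball_v v S x \<gamma> \<subseteq> B"
      using radius y(2,3) c by meson
    define \<mu> where "\<mu> = min (min \<alpha> \<beta>) \<gamma>"
    have "\<mu> \<le> v (a - b)"
      using v_diff_trans_ge[of \<mu> a x b] \<alpha>(1) \<beta>(1) by (simp add: \<mu>_def v_diff_commute[of x b] min_le_iff_disj)
    then have "\<mu> \<le> v (y - c)"
      using y(4) by (rule order.trans)
    moreover have "\<mu> \<le> v (c - x)"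
      using \<gamma>(1) by (simp add: \<mu>_def min_le_iff_disj)
    ultimately have "\<mu> \<le> v (y - x)"
      by (rule v_diff_trans_ge)
    then have "y \<in> closed_ball_v v S x \<mu>"
      using y(1) by (simp add: closed_ball_v_def)
    moreover have "\<mu> = \<alpha> \<or> \<mu> = \<beta> \<or> \<mu> = \<gamma>"
      by (simp add: \<mu>_def min_def)
    ultimately show "y \<in> B"
      using \<alpha>(2) \<beta>(2) \<gamma>(2) by blast
  qed
qed

lemma ball_subset: "is_ball_v v S B \<Longrightarrow> B \<subseteq> S"
  using ball_centre by blast

lemma ball_nonempty: "is_ball_v v S B \<Longrightarrow> B \<noteq> {}"
  using ball_centre by blast

section \<open>Product balls\<close>

lemma prod_ball_project:
  assumes "i < n" "\<forall>j<n. c j \<in> A j" "upclosed U" "U \<noteq> {}"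
  shows "(\<lambda>x. x i) ` prod_ball v A n c U = cut_ball v (A i) (c i) U"
proof
  show "(\<lambda>x. x i) ` prod_ball v A n c U \<subseteq> cut_ball v (A i) (c i) U"
    using assms(1) by (auto simp: prod_ball_def cut_ball_def)
  have "v 0 \<in> U"
    using assms(3,4) unfolding upclosed_def by (auto simp: v_zero)
  then have "a = (c(i := a)) i \<and> c(i := a) \<in> prod_ball v A n c U" if "a \<in> cut_ball v (A i) (c i) U" for a
    using that assms(2) by (auto simp: prod_ball_def cut_ball_def)
  then show "cut_ball v (A i) (c i) U \<subseteq> (\<lambda>x. x i) ` prod_ball v A n c U"
    by blast
qed

lemma prod_ball_subset:
  assumes "upclosed U'" "U \<subseteq> U'" "c' \<in> prod_ball v A n c U'"
  shows "prod_ball v A n c' U \<subseteq> prod_ball v A n c U'"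
  using assms v_diff_trans_mem[OF assms(1)] unfolding prod_ball_def by blast

lemma prod_ball_shift_subset:
  assumes U: "upclosed U" "U' \<subseteq> U" and q: "q \<in> prod_ball v A n p U"
    and d: "\<forall>i<n. q i + d i \<in> A i" "\<forall>i<n. v (d i) \<in> U"
  shows "prod_ball v A n (\<lambda>i. q i + d i) U' \<subseteq> prod_ball v A n p U"
proof (rule prod_ball_subset[OF U])
  have "v ((q i + d i) - p i) \<in> U" if "i < n" for i
    using v_diff_trans_mem[OF U(1), of "q i + d i" "q i" "p i"] q d(2) that by (simp add: prod_ball_def)
  then show "(\<lambda>i. q i + d i) \<in> prod_ball v A n p U"
    using d(1) by (simp add: prod_ball_def)
qed

lemma v_sum_diff_mem:
  assumes "upclosed U" "U \<noteq> {}" "q \<in> prod_ball v A n p U"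
  shows "v ((\<Sum>i<n. q i) - (\<Sum>i<n. p i)) \<in> U"
  using v_sum_mem[OF assms(1,2), of n "\<lambda>i. q i - p i"] assms(3)
  by (simp add: prod_ball_def sum_subtractf)

lemma v_sum_diff_ge:
  assumes "q \<in> prod_ball v A n p {\<alpha>..}"
  shows "\<alpha> \<le> v ((\<Sum>i<n. q i) - (\<Sum>i<n. p i))"
  using v_sum_diff_mem[OF upclosed_atLeast _ assms] by simp

lemma sum_mem_ball_if_mem_prod_ball:
  assumes B: "is_ball_v v (sum_sets A n) B" and p: "(\<Sum>i<n. p i) \<in> B"
    and q: "q \<in> prod_ball v A n p (diam_set v B)"
  shows "(\<Sum>i<n. q i) \<in> B"
proof -
  have "v ((\<Sum>i<n. q i) - (\<Sum>i<n. p i)) \<in> diam_set v B"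
    using v_sum_diff_mem[OF upclosed_diam_set diam_set_nonempty q] p by blast
  moreover have "(\<Sum>i<n. q i) \<in> sum_sets A n"
    using q by (simp add: prod_ball_def sum_mem_sum_sets)
  ultimately show ?thesis
    using ball_eq_cut_ball[OF B p] unfolding cut_ball_def by blast
qed

lemma prod_ball_atLeast_subset:
  assumes "c' \<in> prod_ball v A n c {\<alpha>..}" "\<alpha> \<le> \<beta>"
  shows "prod_ball v A n c' {\<beta>..} \<subseteq> prod_ball v A n c {\<alpha>..}"
  using prod_ball_subset[OF upclosed_atLeast _ assms(1)] assms(2) by simp

lemma prod_ball_chain_has_common_point:
  assumes sub: "\<forall>i<n. ab_subgroup (A i)" and sc: "\<forall>i<n. spherically_complete v (A i)"
    and M: "M \<noteq> {}" "\<forall>K1\<in>M. \<forall>K2\<in>M. K1 \<subseteq> K2 \<or> K2 \<subseteq> K1"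
    and balls: "\<forall>K\<in>M. is_prod_ball v A n K"
  obtains q where "\<forall>K\<in>M. q \<in> K"
proof -
  have "\<exists>a. \<forall>K\<in>M. a \<in> (\<lambda>x. x i) ` K" if i: "i < n" for i
  proof -
    let ?N = "(\<lambda>K. (\<lambda>x. x i) ` K) ` M"
    have "is_ball_v v (A i) ((\<lambda>x. x i) ` K)" if "K \<in> M" for K
    proof -
      obtain c U where cU: "\<forall>i<n. c i \<in> A i" "upclosed U" "U \<noteq> {}" "K = prod_ball v A n c U"
        using balls[rule_format, OF \<open>K \<in> M\<close>] unfolding is_prod_ball_def by blast
      have "is_ball_v v (A i) (cut_ball v (A i) (c i) U)"
        using sub i cU(1-3) by (simp add: cut_ball_is_ball)
      then show ?thesis
        using prod_ball_project[OF i cU(1-3)] cU(4) by simp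
    qed
    moreover have "\<forall>B1\<in>?N. \<forall>B2\<in>?N. B1 \<subseteq> B2 \<or> B2 \<subseteq> B1"
    proof (intro ballI)
      fix B1 B2 assume "B1 \<in> ?N" "B2 \<in> ?N"
      then obtain K1 K2 where "K1 \<in> M" "K2 \<in> M" "B1 = (\<lambda>x. x i) ` K1" "B2 = (\<lambda>x. x i) ` K2"
        by blast
      then show "B1 \<subseteq> B2 \<or> B2 \<subseteq> B1"
        using M(2) image_mono by metis
    qed
    ultimately have "\<Inter>?N \<noteq> {}"
      using spherically_completeD[of v "A i" ?N] sc i M(1) by blast
    then show ?thesis
      by blast
  qed
  then obtain f where f: "\<forall>i<n. \<forall>K\<in>M. f i \<in> (\<lambda>x. x i) ` K"
    by (metis (mono_tags))
  have "f \<in> K" if "K \<in> M" for K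
  proof -
    obtain c U where cU: "\<forall>i<n. c i \<in> A i" "upclosed U" "U \<noteq> {}" "K = prod_ball v A n c U"
      using balls[rule_format, OF \<open>K \<in> M\<close>] unfolding is_prod_ball_def by blast
    have "\<forall>i<n. f i \<in> cut_ball v (A i) (c i) U"
      using f \<open>K \<in> M\<close> prod_ball_project[OF _ cU(1-3)] cU(4) by blast
    then show ?thesis
      using cU(4) by (simp add: prod_ball_def cut_ball_def)
  qed
  then show ?thesis
    using that by blast
qed

lemma obtain_maximal_chain_of_prod_balls:
  assumes sub: "\<forall>i<n. ab_subgroup (A i)" and sc: "\<forall>i<n. spherically_complete v (A i)"
    and F: "F \<noteq> {}"
    and balls: "\<forall>K\<in>F. is_prod_ball v A n K"
  obtains M q where "M \<subseteq> F" "M \<noteq> {}" "\<forall>K\<in>M. q \<in> K"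
    "\<And>K. K \<in> F \<Longrightarrow> \<forall>L\<in>M. K \<subseteq> L \<Longrightarrow> K \<in> M"
proof -
  obtain M where M: "subset.maxchain F M"
    using subset.Hausdorff by blast
  then have chain: "M \<subseteq> F" "\<forall>K1\<in>M. \<forall>K2\<in>M. K1 \<subseteq> K2 \<or> K2 \<subseteq> K1"
    unfolding subset.maxchain_def subset.chain_def by auto
  have "M \<noteq> {}"
    using F maxchain_extend[OF M] by blast
  moreover obtain q where "\<forall>K\<in>M. q \<in> K"
    using prod_ball_chain_has_common_point[OF sub sc \<open>M \<noteq> {}\<close> chain(2)] balls chain(1) by blast
  ultimately show ?thesis
    using that chain(1) maxchain_extend[OF M] by blast
qed

section \<open>Pseudo-direct sums\<close>

lemma error_le_in_prod_ball:
  assumes "q \<in> prod_ball v A n p {v (s - (\<Sum>i<n. p i))..}"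
  shows "v (s - (\<Sum>i<n. p i)) \<le> v (s - (\<Sum>i<n. q i))"
  using v_diff_trans_ge[OF order_refl, of s "\<Sum>i<n. p i" "\<Sum>i<n. q i"] v_sum_diff_ge[OF assms]
  by (simp add: v_diff_commute[of "\<Sum>i<n. p i"])

lemma partial_decomposition_in_prod_ball:
  assumes p: "partial_decomposition v A n s p"
    and q: "q \<in> prod_ball v A n p {v (s - (\<Sum>i<n. p i))..}"
  shows "partial_decomposition v A n s q"
  unfolding partial_decomposition_def
proof (intro conjI allI impI)
  fix i assume "i < n"
  then have "q i \<in> A i" "v s \<le> v (q i - p i)" "v s \<le> v (p i)"
    using p q order.trans unfolding partial_decomposition_def prod_ball_def by fastforce+
  then show "q i \<in> A i" "v s \<le> v (q i)"
    using v_add_ge[of "v s" "q i - p i" "p i"] by simp_all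
next
  show "v s \<le> v (s - (\<Sum>i<n. q i))"
    using p error_le_in_prod_ball[OF q] unfolding partial_decomposition_def by (blast intro: order.trans)
qed

lemma pseudo_direct_approximation_step:
  assumes sub: "\<forall>i<n. ab_subgroup (A i)" and pd: "pseudo_direct v A n"
    and s: "s \<in> sum_sets A n" and q: "\<forall>i<n. q i \<in> A i" and ne: "(\<Sum>i<n. q i) \<noteq> s"
  obtains q' where "\<forall>i<n. q' i \<in> A i" "\<forall>i<n. v (s - (\<Sum>i<n. q i)) \<le> v (q' i - q i)"
    "v ((\<Sum>i<n. q' i) - (\<Sum>i<n. q i)) = v (s - (\<Sum>i<n. q i))"
    "v (s - (\<Sum>i<n. q i)) < v (s - (\<Sum>i<n. q' i))"
proof -
  define x where "x = s - (\<Sum>i<n. q i)"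
  have "x \<in> sum_sets A n" "x \<noteq> 0"
    using sum_sets_diff[OF sub s sum_mem_sum_sets[OF q]] ne by (auto simp: x_def)
  then obtain r where r: "\<forall>i<n. r i \<in> A i" "v (\<Sum>i<n. r i) = (MIN i\<in>{..<n}. v (r i))"
    "v x < v (x - (\<Sum>i<n. r i))"
    using pd unfolding pseudo_direct_def by blast
  then have v_r: "v (\<Sum>i<n. r i) = v x"
    using v_eq_if_less_v_diff by blast
  define q' where "q' i = q i + r i" for i
  show ?thesis
  proof (rule that)
    show "\<forall>i<n. q' i \<in> A i"
      using q r(1) sub by (auto simp: q'_def intro: ab_subgroup_add)
    show "\<forall>i<n. v (s - (\<Sum>i<n. q i)) \<le> v (q' i - q i)"
      using r(2) v_r by (auto simp: q'_def x_def)
    show "v ((\<Sum>i<n. q' i) - (\<Sum>i<n. q i)) = v (s - (\<Sum>i<n. q i))"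
      using v_r by (simp add: q'_def x_def sum.distrib)
    show "v (s - (\<Sum>i<n. q i)) < v (s - (\<Sum>i<n. q' i))"
      using r(3) by (simp add: q'_def x_def sum.distrib diff_diff_eq)
  qed
qed

text \<open>
  Successive approximation: a partial decomposition \<open>p\<close> of \<open>s\<close> carries the product ball
  \<open>K p\<close> around \<open>p\<close> whose radius is the error \<open>e p = v (s - \<Sum> p)\<close>. A common point \<open>q\<close> of a
  maximal chain of these balls is a partial decomposition with \<open>K q\<close> below the chain. If
  \<open>\<Sum> q \<noteq> s\<close>, pseudo-directness gives \<open>q'\<close> with \<open>K q' \<subseteq> K q\<close>, so \<open>K q'\<close> joins the chain and
  \<open>q \<in> K q'\<close>; then \<open>e q = v (\<Sum> q' - \<Sum> q) \<ge> e q' > e q\<close>.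
\<close>
lemma pseudo_direct_decomposition:
  assumes sub: "\<forall>i<n. ab_subgroup (A i)" and sc: "\<forall>i<n. spherically_complete v (A i)"
    and pd: "pseudo_direct v A n" and s: "s \<in> sum_sets A n"
  obtains d where "\<forall>i<n. d i \<in> A i" "(\<Sum>i<n. d i) = s" "\<forall>i<n. v s \<le> v (d i)"
proof -
  define e where "e p = v (s - (\<Sum>i<n. p i))" for p
  define adm where "adm = partial_decomposition v A n s"
  define K where "K p = prod_ball v A n p {e p..}" for p
  have adm_K: "adm q \<and> e p \<le> e q" if "adm p" "q \<in> K p" for p q
    using partial_decomposition_in_prod_ball error_le_in_prod_ball that
    unfolding adm_def K_def e_def by blast
  have "adm (\<lambda>_. 0)"
    using sub by (simp add: adm_def partial_decomposition_def ab_subgroup_zero v_zero)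
  then have F_ne: "K ` Collect adm \<noteq> {}"
    by blast
  have balls: "\<forall>L\<in>K ` Collect adm. is_prod_ball v A n L"
    by (auto simp: K_def adm_def partial_decomposition_def intro!: is_prod_ballI upclosed_atLeast)
  obtain M q where M: "M \<subseteq> K ` Collect adm" "M \<noteq> {}" "\<forall>L\<in>M. q \<in> L"
    and maximal: "\<And>L. L \<in> K ` Collect adm \<Longrightarrow> \<forall>L'\<in>M. L \<subseteq> L' \<Longrightarrow> L \<in> M"
    by (rule obtain_maximal_chain_of_prod_balls[OF sub sc F_ne balls]) (rule that)
  have adm_q: "adm q"
  proof -
    obtain p where "adm p" "K p \<in> M"
      using M(1,2) by blast
    then show ?thesis
      using adm_K M(3) by blast
  qed
  have below_chain: "K q \<subseteq> L" if "L \<in> M" for L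
  proof -
    obtain p where p: "adm p" "L = K p"
      using M(1) \<open>L \<in> M\<close> by blast
    then have "q \<in> K p"
      using M(3) \<open>L \<in> M\<close> by blast
    moreover have "e p \<le> e q"
      using adm_K[OF p(1) calculation] by blast
    ultimately show ?thesis
      unfolding p(2) K_def by (rule prod_ball_atLeast_subset)
  qed
  have "(\<Sum>i<n. q i) = s"
  proof (rule ccontr)
    assume ne: "(\<Sum>i<n. q i) \<noteq> s"
    have "\<forall>i<n. q i \<in> A i"
      using adm_q by (simp add: adm_def partial_decomposition_def)
    then obtain q' where q': "\<forall>i<n. q' i \<in> A i" "\<forall>i<n. e q \<le> v (q' i - q i)"
      "v ((\<Sum>i<n. q' i) - (\<Sum>i<n. q i)) = e q" "e q < e q'"
      by (rule pseudo_direct_approximation_step[OF sub pd s _ ne, folded e_def]) (rule that)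
    then have "q' \<in> K q"
      by (simp add: K_def prod_ball_def)
    then have "K q' \<subseteq> K q" "adm q'"
      using prod_ball_atLeast_subset q'(4) adm_K[OF adm_q] unfolding K_def by auto
    then have "K q' \<in> M"
      using maximal below_chain by blast
    then have "q \<in> K q'"
      using M(3) by blast
    then have "e q' \<le> v ((\<Sum>i<n. q i) - (\<Sum>i<n. q' i))"
      unfolding K_def by (rule v_sum_diff_ge)
    then show False
      using q'(3,4) by (simp add: v_diff_commute)
  qed
  then show ?thesis
    using that adm_q unfolding adm_def partial_decomposition_def by blast
qed

section \<open>Spherical completeness and optimal approximation\<close>

text \<open>
  A common point \<open>q\<close> of a maximal chain of product balls \<open>prod_ball p (diam_set B)\<close>
  with \<open>\<Sum> p \<in> B\<close> sums into every ball \<open>B\<close> of the nest: otherwise a decomposition of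
  \<open>y - \<Sum> q\<close> for some \<open>y \<in> B\<close> moves \<open>q\<close> to a point \<open>p'\<close> summing to \<open>y\<close> whose
  product ball lies below the whole chain.
\<close>
theorem spherically_complete_sum_sets:
  assumes sub: "\<forall>i<n. ab_subgroup (A i)" and sc: "\<forall>i<n. spherically_complete v (A i)"
    and pd: "pseudo_direct v A n"
  shows "spherically_complete v (sum_sets A n)"
  unfolding spherically_complete_def
proof (intro allI impI)
  fix \<N> assume "\<N> \<noteq> {} \<and> (\<forall>B\<in>\<N>. is_ball_v v (sum_sets A n) B) \<and> (\<forall>B1\<in>\<N>. \<forall>B2\<in>\<N>. B1 \<subseteq> B2 \<or> B2 \<subseteq> B1)"
  then have \<N>: "\<N> \<noteq> {}" "\<And>B. B \<in> \<N> \<Longrightarrow> is_ball_v v (sum_sets A n) B"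
    "\<And>B1 B2. B1 \<in> \<N> \<Longrightarrow> B2 \<in> \<N> \<Longrightarrow> B1 \<subseteq> B2 \<or> B2 \<subseteq> B1"
    by auto
  define F where "F = {prod_ball v A n p (diam_set v B) | p B. B \<in> \<N> \<and> (\<forall>i<n. p i \<in> A i) \<and> (\<Sum>i<n. p i) \<in> B}"
  have "F \<noteq> {}"
  proof -
    obtain B y where "B \<in> \<N>" "y \<in> B"
      using \<N>(1) ball_nonempty[OF \<N>(2)] by blast
    moreover obtain p where "\<forall>i<n. p i \<in> A i" "y = (\<Sum>i<n. p i)"
      using ball_subset[OF \<N>(2)[OF \<open>B \<in> \<N>\<close>]] \<open>y \<in> B\<close> mem_sum_sets_iff by blast
    ultimately show ?thesis
      unfolding F_def by blast
  qed
  moreover have "\<forall>K\<in>F. is_prod_ball v A n K"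
    by (auto simp: F_def intro!: is_prod_ballI upclosed_diam_set diam_set_nonempty)
  ultimately obtain M q where M: "M \<subseteq> F" "M \<noteq> {}" "\<forall>K\<in>M. q \<in> K"
    and maximal: "\<And>K. K \<in> F \<Longrightarrow> \<forall>L\<in>M. K \<subseteq> L \<Longrightarrow> K \<in> M"
    by (rule obtain_maximal_chain_of_prod_balls[OF sub sc]) (rule that)
  have q: "\<forall>i<n. q i \<in> A i"
  proof -
    obtain K where "K \<in> M"
      using M(2) by blast
    then obtain p B where "q \<in> prod_ball v A n p (diam_set v B)"
      using M(1,3) unfolding F_def by blast
    then show ?thesis
      by (simp add: prod_ball_def)
  qed
  have sum_q_mem: "(\<Sum>i<n. q i) \<in> B"
    if "B \<in> \<N>" "(\<Sum>i<n. p i) \<in> B" "prod_ball v A n p (diam_set v B) \<in> M" for p B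
    using sum_mem_ball_if_mem_prod_ball[OF \<N>(2)[OF that(1)] that(2)] M(3) that(3) by blast
  have "(\<Sum>i<n. q i) \<in> B" if B: "B \<in> \<N>" for B
  proof (rule ccontr)
    assume q_notin: "(\<Sum>i<n. q i) \<notin> B"
    obtain y where y: "y \<in> B"
      using ball_nonempty[OF \<N>(2)[OF B]] by blast
    have "y - (\<Sum>i<n. q i) \<in> sum_sets A n"
      using sum_sets_diff[OF sub _ sum_mem_sum_sets[OF q]] ball_subset[OF \<N>(2)[OF B]] y by blast
    then obtain d where d: "\<forall>i<n. d i \<in> A i" "(\<Sum>i<n. d i) = y - (\<Sum>i<n. q i)"
      "\<forall>i<n. v (y - (\<Sum>i<n. q i)) \<le> v (d i)"
      by (rule pseudo_direct_decomposition[OF sub sc pd])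
    define p' where "p' = (\<lambda>i. q i + d i)"
    have p'_A: "\<forall>i<n. p' i \<in> A i"
      using q d(1) sub by (auto simp: p'_def intro: ab_subgroup_add)
    have sum_p': "(\<Sum>i<n. p' i) = y"
      using d(2) by (simp add: p'_def sum.distrib)
    have "prod_ball v A n p' (diam_set v B) \<subseteq> L" if "L \<in> M" for L
    proof -
      obtain p B' where B': "B' \<in> \<N>" "(\<Sum>i<n. p i) \<in> B'" and L: "L = prod_ball v A n p (diam_set v B')"
        using \<open>L \<in> M\<close> M(1) unfolding F_def by blast
      have "(\<Sum>i<n. q i) \<in> B'"
        using sum_q_mem B' \<open>L \<in> M\<close> L by blast
      then have "B \<subseteq> B'"
        using \<N>(3)[OF B B'(1)] q_notin by blast
      have "v (y - (\<Sum>i<n. q i)) \<in> diam_set v B'"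
        using \<open>B \<subseteq> B'\<close> y \<open>(\<Sum>i<n. q i) \<in> B'\<close> by (blast intro: diff_mem_diam_set)
      then have "\<forall>i<n. v (d i) \<in> diam_set v B'"
        using d(3) upclosed_diam_set unfolding upclosed_def by blast
      moreover have "q \<in> L"
        using M(3) \<open>L \<in> M\<close> by blast
      ultimately show ?thesis
        using prod_ball_shift_subset[OF upclosed_diam_set diam_set_mono[OF \<open>B \<subseteq> B'\<close>]] p'_A
        unfolding L p'_def by blast
    qed
    then have "prod_ball v A n p' (diam_set v B) \<in> M"
      using maximal B p'_A sum_p' y unfolding F_def by blast
    then show False
      using sum_q_mem[OF B] sum_p' y q_notin by blast
  qed
  then show "\<Inter>\<N> \<noteq> {}"
    using \<N>(1) by blast
qed

theorem spherically_complete_optimal_approximation: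
  assumes S: "ab_subgroup S" and sc: "spherically_complete v S"
  obtains y0 where "y0 \<in> S" "\<forall>y\<in>S. v (z - y) \<le> v (z - y0)"
proof -
  have "0 \<in> S"
    using S by (rule ab_subgroup_zero)
  define Bz where "Bz y = {x\<in>S. v (z - y) \<le> v (z - x)}" for y
  have "Bz y = cut_ball v S y {v (z - y)..}" for y
    unfolding Bz_def cut_ball_def by (simp add: v_diff_le_iff)
  then have "\<forall>B\<in>Bz ` S. is_ball_v v S B"
    using cut_ball_is_ball[OF S _ upclosed_atLeast] by auto
  moreover have "Bz y1 \<subseteq> Bz y2 \<or> Bz y2 \<subseteq> Bz y1" for y1 y2
    by (cases "v (z - y1) \<le> v (z - y2)") (auto simp: Bz_def)
  then have "\<forall>B1\<in>Bz ` S. \<forall>B2\<in>Bz ` S. B1 \<subseteq> B2 \<or> B2 \<subseteq> B1"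
    by blast
  moreover have "Bz ` S \<noteq> {}"
    using \<open>0 \<in> S\<close> by blast
  ultimately have "\<Inter>(Bz ` S) \<noteq> {}"
    by (rule spherically_completeD[OF sc, rotated])
  then obtain x where x: "\<forall>y\<in>S. x \<in> Bz y"
    by blast
  then have "x \<in> S"
    using \<open>0 \<in> S\<close> by (simp add: Bz_def)
  then show ?thesis
    using that x by (simp add: Bz_def)
qed

end

theorem theorem65:
  fixes v :: "'a::ab_group_add \<Rightarrow> 'g::{linorder,order_top}"
    and A :: "nat \<Rightarrow> 'a set" and n :: nat
  assumes "valued_group v"
    and "\<forall>i<n. ab_subgroup (A i)"
    and "\<forall>i<n. spherically_complete v (A i)"
    and "pseudo_direct v A n"
  shows "spherically_complete v (sum_sets A n) \<and>
         (\<forall>z. \<exists>y0\<in>sum_sets A n. \<forall>y\<in>sum_sets A n. v (z - y) \<le> v (z - y0))"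
proof -
  have complete: "spherically_complete v (sum_sets A n)"
    using spherically_complete_sum_sets[OF assms] .
  moreover have "\<exists>y0\<in>sum_sets A n. \<forall>y\<in>sum_sets A n. v (z - y) \<le> v (z - y0)" for z
    using spherically_complete_optimal_approximation[OF assms(1) ab_subgroup_sum_sets[OF assms(2)] complete]
    by metis
  ultimately show ?thesis
    by blast
qed

end
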